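(* Let $\mathbb{X}$ be a finite subset of the projective space $\mathbb{P}^{s-1}$ over a field $K$, and let $I(\mathbb{X})\subset S=K[t_1,\ldots,t_s]$ be its vanishing ideal. If $0\neq f\in S$ is homogeneous, then $$|V_{\mathbb{X}}(f)|=\begin{cases}\deg(S/(I(\mathbb{X}),f)) & \text{if } (I(\mathbb{X})\colon f)\neq I(\mathbb{X}),\\ 0 & \text{if } (I(\mathbb{X})\colon f)=I(\mathbb{X}).\end{cases}$$
   Context: $I(\mathbb{X})$ is the ideal generated by all homogeneous polynomials vanishing at every point of $\mathbb{X}$. $V_{\mathbb{X}}(f)$ is the set of points $[\alpha]\in\mathbb{X}$ with $f(\alpha)=0$. $(I\colon f)=\{h\in S: hf\in I\}$. For a graded ideal $J$ with Hilbert function $H_J(d)=\dim_K(S_d/J_d)$ and $k=\dim(S/J)$, $\deg(S/J)=(k-1)!\lim_{d\to\infty}H_J(d)/d^{k-1}$ if $k\geq 1$ and $\dim_K(S/J)$ if $k=0$. *)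

theory Defs
  imports Complex_Main "HOL-Library.Poly_Mapping"
begin

text \<open>Polynomials in the variables t_1,...,t_s are represented as poly_mappings from
  monomials (finitely supported exponent vectors; variable t_(i+1) has index i) to coefficients.\<close>

type_synonym 'a mpoly = "(nat \<Rightarrow>\<^sub>0 nat) \<Rightarrow>\<^sub>0 'a"

definition polyS :: "nat \<Rightarrow> 'a::field mpoly set" where
  "polyS s = {p. \<forall>m \<in> Poly_Mapping.keys p. \<forall>i \<in> Poly_Mapping.keys m. i < s}"

definition mdeg :: "(nat \<Rightarrow>\<^sub>0 nat) \<Rightarrow> nat" where
  "mdeg m = (\<Sum>i \<in> Poly_Mapping.keys m. Poly_Mapping.lookup m i)"

definition homog_of_deg :: "nat \<Rightarrow> 'a::field mpoly \<Rightarrow> bool" where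
  "homog_of_deg d p \<longleftrightarrow> (\<forall>m \<in> Poly_Mapping.keys p. mdeg m = d)"

definition homogeneous :: "'a::field mpoly \<Rightarrow> bool" where
  "homogeneous p \<longleftrightarrow> (\<exists>d. homog_of_deg d p)"

definition eval :: "'a::field mpoly \<Rightarrow> (nat \<Rightarrow> 'a) \<Rightarrow> 'a" where
  "eval p \<alpha> = (\<Sum>m \<in> Poly_Mapping.keys p. Poly_Mapping.lookup p m * (\<Prod>i \<in> Poly_Mapping.keys m. \<alpha> i ^ Poly_Mapping.lookup m i))"

definition const :: "'a::field \<Rightarrow> 'a mpoly" where
  "const c = Poly_Mapping.single 0 c"

definition is_ideal :: "nat \<Rightarrow> 'a::field mpoly set \<Rightarrow> bool" where
  "is_ideal s J \<longleftrightarrow> J \<subseteq> polyS s \<and> 0 \<in> J \<and> (\<forall>a\<in>J. \<forall>b\<in>J. a + b \<in> J)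
     \<and> (\<forall>a\<in>J. \<forall>h\<in>polyS s. h * a \<in> J)"

definition ideal_gen :: "nat \<Rightarrow> 'a::field mpoly set \<Rightarrow> 'a mpoly set" where
  "ideal_gen s G = \<Inter> {J. is_ideal s J \<and> G \<subseteq> J}"

definition vanishing_ideal :: "nat \<Rightarrow> (nat \<Rightarrow> 'a::field) set \<Rightarrow> 'a mpoly set" where
  "vanishing_ideal s X = ideal_gen s {g \<in> polyS s. homogeneous g \<and> (\<forall>\<alpha>\<in>X. eval g \<alpha> = 0)}"

definition zero_set :: "(nat \<Rightarrow> 'a::field) set \<Rightarrow> 'a mpoly \<Rightarrow> (nat \<Rightarrow> 'a) set" where
  "zero_set X f = {\<alpha> \<in> X. eval f \<alpha> = 0}"

definition colon :: "nat \<Rightarrow> 'a::field mpoly set \<Rightarrow> 'a mpoly \<Rightarrow> 'a mpoly set" where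
  "colon s I f = {h \<in> polyS s. h * f \<in> I}"

text \<open>K-linear span and dimension of a quotient V/W (minimal number of elements of V
  which together with W span V).\<close>
definition lin_span :: "'a::field mpoly set \<Rightarrow> 'a mpoly set" where
  "lin_span A = {(\<Sum>a\<in>B. const (c a) * a) | B c. finite B \<and> B \<subseteq> A}"

definition quot_dim :: "'a::field mpoly set \<Rightarrow> 'a mpoly set \<Rightarrow> nat" where
  "quot_dim V W = (LEAST n. \<exists>B. finite B \<and> card B = n \<and> B \<subseteq> V \<and> V \<subseteq> lin_span (B \<union> W))"

text \<open>Homogeneous component S_d and the Hilbert function H_J(d) = dim_K(S_d / J_d).\<close>
definition polyS_deg :: "nat \<Rightarrow> nat \<Rightarrow> 'a::field mpoly set" where
  "polyS_deg s d = {p \<in> polyS s. homog_of_deg d p}"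

definition hilbert_fun :: "nat \<Rightarrow> 'a::field mpoly set \<Rightarrow> nat \<Rightarrow> nat" where
  "hilbert_fun s J d = quot_dim (polyS_deg s d) (J \<inter> polyS_deg s d)"

text \<open>Krull dimension of S/J: supremum of lengths k of chains P_0 \<subset> ... \<subset> P_k of prime
  ideals of S containing J.\<close>
definition is_prime_ideal :: "nat \<Rightarrow> 'a::field mpoly set \<Rightarrow> bool" where
  "is_prime_ideal s P \<longleftrightarrow> is_ideal s P \<and> P \<noteq> polyS s \<and>
     (\<forall>a\<in>polyS s. \<forall>b\<in>polyS s. a * b \<in> P \<longrightarrow> a \<in> P \<or> b \<in> P)"

definition krull_dim_quot :: "nat \<Rightarrow> 'a::field mpoly set \<Rightarrow> nat" where
  "krull_dim_quot s J = Sup {k. \<exists>P :: nat \<Rightarrow> 'a mpoly set.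
      (\<forall>i\<le>k. is_prime_ideal s (P i)) \<and> J \<subseteq> P 0 \<and> (\<forall>i<k. P i \<subset> P (Suc i))}"

definition degree_quot :: "nat \<Rightarrow> 'a::field mpoly set \<Rightarrow> real" where
  "degree_quot s J = (let k = krull_dim_quot s J in
     if k \<ge> 1 then fact (k - 1) * lim (\<lambda>d. real (hilbert_fun s J d) / real d ^ (k - 1))
     else real (quot_dim (polyS s) J))"

text \<open>A finite set X of points of P^{s-1}, given by one representative per point.\<close>
definition proj_point_set :: "nat \<Rightarrow> (nat \<Rightarrow> 'a::field) set \<Rightarrow> bool" where
  "proj_point_set s X \<longleftrightarrow>
     (\<forall>\<alpha>\<in>X. (\<forall>i\<ge>s. \<alpha> i = 0) \<and> (\<exists>i<s. \<alpha> i \<noteq> 0)) \<and>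
     (\<forall>\<alpha>\<in>X. \<forall>\<beta>\<in>X. (\<exists>c. \<forall>i. \<beta> i = c * \<alpha> i) \<longrightarrow> \<alpha> = \<beta>)"

end

theory Submission
  imports Defs "HOL-Computational_Algebra.Polynomial" "HOL-Library.Function_Algebras"
begin

text \<open>A form vanishes at a point \<open>[\<alpha>]\<close> iff it vanishes on the line \<open>K\<alpha>\<close>, i.e. iff the univariate
  polynomial \<open>p(t\<alpha>)\<close> is zero; as this condition passes to homogeneous components, \<open>I(X)\<close> is the
  ideal of all polynomials vanishing on the lines through the points of \<open>X\<close>.
  Products of linear forms separating the points give Lagrange interpolation forms of every
  degree \<open>\<ge> |X| - 1\<close>. With them, \<open>(I(X) : f) \<noteq> I(X)\<close> exactly when \<open>f\<close> has a zero in \<open>X\<close>, and in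
  every degree \<open>d \<ge> deg f + |X|\<close> the ideal \<open>(I(X), f)\<close> consists of the forms vanishing on
  \<open>V\<^sub>X(f)\<close>, a subspace of codimension \<open>|V\<^sub>X(f)|\<close> in \<open>S\<^sub>d\<close>; so the Hilbert function of
  \<open>S/(I(X), f)\<close> is eventually \<open>|V\<^sub>X(f)|\<close>.
  A prime containing \<open>I(X)\<close> contains the ideal \<open>I(K\<alpha>)\<close> of some line, and \<open>S/I(K\<alpha>) \<cong> K[t]\<close> is a
  principal ideal domain, so chains of primes above it have length at most one, while
  \<open>I(K\<alpha>) \<subset> (t\<^sub>1, \<dots>, t\<^sub>s)\<close> is such a chain containing \<open>(I(X), f)\<close> when \<open>[\<alpha>] \<in> V\<^sub>X(f)\<close>. Hence
  \<open>S/(I(X), f)\<close> has Krull dimension one and degree \<open>0! \<cdot> |V\<^sub>X(f)|\<close>.\<close>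

section \<open>Evaluation homomorphisms\<close>

definition monom_val :: "(nat \<Rightarrow> 'b::comm_ring_1) \<Rightarrow> (nat \<Rightarrow>\<^sub>0 nat) \<Rightarrow> 'b" where
  "monom_val x m = (\<Prod>i\<in>Poly_Mapping.keys m. x i ^ Poly_Mapping.lookup m i)"

definition eval_hom :: "('a::field \<Rightarrow> 'b::comm_ring_1) \<Rightarrow> (nat \<Rightarrow> 'b) \<Rightarrow> 'a mpoly \<Rightarrow> 'b" where
  "eval_hom \<phi> x p = (\<Sum>m\<in>Poly_Mapping.keys p. \<phi> (Poly_Mapping.lookup p m) * monom_val x m)"

lemma keys_plus_eq_union:
  "Poly_Mapping.keys (m + n :: nat \<Rightarrow>\<^sub>0 nat) = Poly_Mapping.keys m \<union> Poly_Mapping.keys n"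
  by (auto simp: in_keys_iff lookup_add)

lemma monom_val_superset:
  assumes "finite K" "Poly_Mapping.keys m \<subseteq> K"
  shows "monom_val x m = (\<Prod>i\<in>K. x i ^ Poly_Mapping.lookup m i)"
  unfolding monom_val_def using assms
  by (intro prod.mono_neutral_left) (auto simp: in_keys_iff)

lemma monom_val_0 [simp]: "monom_val x 0 = 1"
  by (simp add: monom_val_def)

lemma monom_val_add: "monom_val x (m + n) = monom_val x m * monom_val x n"
proof -
  let ?K = "Poly_Mapping.keys m \<union> Poly_Mapping.keys n"
  have "monom_val x (m + n) = (\<Prod>i\<in>?K. x i ^ Poly_Mapping.lookup (m + n) i)"
    by (rule monom_val_superset) (auto simp: keys_plus_eq_union)
  also have "\<dots> = (\<Prod>i\<in>?K. x i ^ Poly_Mapping.lookup m i) * (\<Prod>i\<in>?K. x i ^ Poly_Mapping.lookup n i)"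
    by (simp add: lookup_add power_add prod.distrib)
  also have "\<dots> = monom_val x m * monom_val x n"
    by (simp add: monom_val_superset[symmetric])
  finally show ?thesis .
qed

lemma sum_single_lookup:
  "(\<Sum>m\<in>Poly_Mapping.keys p. Poly_Mapping.single m (Poly_Mapping.lookup p m)) = p"
  by (rule poly_mapping_eqI) (simp add: lookup_sum lookup_single when_def in_keys_iff
        sum.delta[OF finite_keys] cong: if_cong)

locale coeff_hom =
  fixes \<phi> :: "'a::field \<Rightarrow> 'b::comm_ring_1"
  assumes hom_add: "\<phi> (a + b) = \<phi> a + \<phi> b" and hom_mult: "\<phi> (a * b) = \<phi> a * \<phi> b"
    and hom_0: "\<phi> 0 = 0" and hom_1: "\<phi> 1 = 1"
begin

lemma eval_hom_0 [simp]: "eval_hom \<phi> x 0 = 0"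
  by (simp add: eval_hom_def)

lemma eval_hom_single [simp]: "eval_hom \<phi> x (Poly_Mapping.single m c) = \<phi> c * monom_val x m"
  by (simp add: eval_hom_def hom_0)

lemma eval_hom_1 [simp]: "eval_hom \<phi> x 1 = 1"
  by (metis eval_hom_single monom_val_0 hom_1 mult_1 single_one)

lemma eval_hom_add: "eval_hom \<phi> x (p + q) = eval_hom \<phi> x p + eval_hom \<phi> x q"
  unfolding eval_hom_def
  by (rule setsum_keys_plus_distrib) (auto simp: hom_0 hom_add distrib_right)

lemma eval_hom_diff: "eval_hom \<phi> x (p - q) = eval_hom \<phi> x p - eval_hom \<phi> x q"
proof -
  have "eval_hom \<phi> x (p - q) + eval_hom \<phi> x q = eval_hom \<phi> x p"
    by (simp flip: eval_hom_add)
  then show ?thesis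
    by (simp add: eq_diff_eq)
qed

lemma eval_hom_sum: "eval_hom \<phi> x (sum f A) = (\<Sum>a\<in>A. eval_hom \<phi> x (f a))"
  by (induction A rule: infinite_finite_induct) (auto simp: eval_hom_add)

lemma eval_hom_mult: "eval_hom \<phi> x (p * q) = eval_hom \<phi> x p * eval_hom \<phi> x q"
proof -
  have "p * q = (\<Sum>m\<in>Poly_Mapping.keys p. Poly_Mapping.single m (Poly_Mapping.lookup p m)) *
      (\<Sum>n\<in>Poly_Mapping.keys q. Poly_Mapping.single n (Poly_Mapping.lookup q n))"
    by (simp add: sum_single_lookup)
  also have "\<dots> = (\<Sum>m\<in>Poly_Mapping.keys p. \<Sum>n\<in>Poly_Mapping.keys q.
      Poly_Mapping.single (m + n) (Poly_Mapping.lookup p m * Poly_Mapping.lookup q n))"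
    by (simp add: sum_product mult_single)
  finally have "p * q = \<dots>" .
  then have "eval_hom \<phi> x (p * q) = (\<Sum>m\<in>Poly_Mapping.keys p. \<Sum>n\<in>Poly_Mapping.keys q.
      \<phi> (Poly_Mapping.lookup p m) * monom_val x m * (\<phi> (Poly_Mapping.lookup q n) * monom_val x n))"
    by (simp add: eval_hom_sum hom_mult monom_val_add algebra_simps)
  also have "\<dots> = eval_hom \<phi> x p * eval_hom \<phi> x q"
    by (simp add: eval_hom_def sum_distrib_left sum_distrib_right) (rule sum.swap)
  finally show ?thesis .
qed

lemma eval_hom_prod: "eval_hom \<phi> x (prod f A) = (\<Prod>a\<in>A. eval_hom \<phi> x (f a))"
  by (induction A rule: infinite_finite_induct) (auto simp: eval_hom_mult)

lemma eval_hom_power: "eval_hom \<phi> x (p ^ n) = eval_hom \<phi> x p ^ n"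
  by (induction n) (auto simp: eval_hom_mult)

end

interpretation id_coeff: coeff_hom "\<lambda>c::'a::field. c"
  by unfold_locales auto

interpretation const_poly_coeff: coeff_hom "\<lambda>c::'a::field. [:c:]"
  by unfold_locales (auto simp: mult_ac)

section \<open>Evaluation at points and restriction to lines\<close>

definition var :: "nat \<Rightarrow> 'a::field mpoly" where
  "var i = Poly_Mapping.single (Poly_Mapping.single i 1) 1"

text \<open>The restriction of \<open>p\<close> to the line through \<open>\<alpha>\<close>: the univariate polynomial \<open>p(t\<alpha>)\<close>.\<close>
definition line_eval :: "(nat \<Rightarrow> 'a::field) \<Rightarrow> 'a mpoly \<Rightarrow> 'a poly" where
  "line_eval \<alpha> p = eval_hom (\<lambda>c. [:c:]) (\<lambda>i. [:0, \<alpha> i:]) p"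

lemma eval_eq_eval_hom: "eval p \<alpha> = eval_hom (\<lambda>c. c) \<alpha> p"
  by (simp add: eval_def eval_hom_def monom_val_def)

lemma eval_add: "eval (p + q) \<alpha> = eval p \<alpha> + eval q \<alpha>"
  by (simp add: eval_eq_eval_hom id_coeff.eval_hom_add)

lemma eval_diff: "eval (p - q) \<alpha> = eval p \<alpha> - eval q \<alpha>"
  by (simp add: eval_eq_eval_hom id_coeff.eval_hom_diff)

lemma eval_mult: "eval (p * q) \<alpha> = eval p \<alpha> * eval q \<alpha>"
  by (simp add: eval_eq_eval_hom id_coeff.eval_hom_mult)

lemma eval_sum: "eval (sum f A) \<alpha> = (\<Sum>a\<in>A. eval (f a) \<alpha>)"
  by (simp add: eval_eq_eval_hom id_coeff.eval_hom_sum)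

lemma eval_prod: "eval (prod f A) \<alpha> = (\<Prod>a\<in>A. eval (f a) \<alpha>)"
  by (simp add: eval_eq_eval_hom id_coeff.eval_hom_prod)

lemma eval_power: "eval (p ^ n) \<alpha> = eval p \<alpha> ^ n"
  by (simp add: eval_eq_eval_hom id_coeff.eval_hom_power)

lemma eval_0 [simp]: "eval 0 \<alpha> = 0"
  by (simp add: eval_eq_eval_hom)

lemma eval_1 [simp]: "eval 1 \<alpha> = 1"
  by (simp add: eval_eq_eval_hom)

lemma eval_const [simp]: "eval (const c) \<alpha> = c"
  by (simp add: eval_eq_eval_hom const_def)

lemma eval_var [simp]: "eval (var i) \<alpha> = \<alpha> i"
  by (simp add: eval_eq_eval_hom var_def monom_val_def)

lemma line_eval_add: "line_eval \<alpha> (p + q) = line_eval \<alpha> p + line_eval \<alpha> q"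
  by (simp add: line_eval_def const_poly_coeff.eval_hom_add)

lemma line_eval_diff: "line_eval \<alpha> (p - q) = line_eval \<alpha> p - line_eval \<alpha> q"
  by (simp add: line_eval_def const_poly_coeff.eval_hom_diff)

lemma line_eval_mult: "line_eval \<alpha> (p * q) = line_eval \<alpha> p * line_eval \<alpha> q"
  by (simp add: line_eval_def const_poly_coeff.eval_hom_mult)

lemma line_eval_prod: "line_eval \<alpha> (prod f A) = (\<Prod>a\<in>A. line_eval \<alpha> (f a))"
  by (simp add: line_eval_def const_poly_coeff.eval_hom_prod)

lemma line_eval_0 [simp]: "line_eval \<alpha> 0 = 0"
  by (simp add: line_eval_def)

lemma line_eval_1 [simp]: "line_eval \<alpha> 1 = 1"
  by (simp add: line_eval_def)

lemma line_eval_const [simp]: "line_eval \<alpha> (const c) = [:c:]"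
  by (simp add: line_eval_def const_def)

lemma line_eval_var [simp]: "line_eval \<alpha> (var i) = [:0, \<alpha> i:]"
  by (simp add: line_eval_def var_def monom_val_def)

lemma mdeg_superset:
  assumes "finite K" "Poly_Mapping.keys m \<subseteq> K"
  shows "mdeg m = (\<Sum>i\<in>K. Poly_Mapping.lookup m i)"
  unfolding mdeg_def using assms
  by (intro sum.mono_neutral_left) (auto simp: in_keys_iff)

lemma mdeg_add: "mdeg (m + n) = mdeg m + mdeg n"
proof -
  let ?K = "Poly_Mapping.keys m \<union> Poly_Mapping.keys n"
  have "mdeg (m + n) = (\<Sum>i\<in>?K. Poly_Mapping.lookup (m + n) i)"
    by (rule mdeg_superset) (auto simp: keys_plus_eq_union)
  also have "\<dots> = mdeg m + mdeg n"
    by (simp add: lookup_add sum.distrib mdeg_superset[symmetric])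
  finally show ?thesis .
qed

lemma mdeg_eq_0_iff: "mdeg m = 0 \<longleftrightarrow> m = 0"
  by (auto simp: mdeg_def in_keys_iff poly_mapping_eqI)

lemma prod_monom: "(\<Prod>i\<in>A. monom (a i) (n i)) = monom (\<Prod>i\<in>A. a i) (\<Sum>i\<in>A. n i)"
  by (induction A rule: infinite_finite_induct) (auto simp: mult_monom)

lemma monom_val_line: "monom_val (\<lambda>i. [:0, \<alpha> i:]) m = monom (monom_val \<alpha> m) (mdeg m)"
proof -
  have "[:0, a:] = monom a 1" for a :: 'a
    by (simp add: monom_Suc monom_0)
  then have "monom_val (\<lambda>i. [:0, \<alpha> i:]) m = (\<Prod>i\<in>Poly_Mapping.keys m.
      monom (\<alpha> i ^ Poly_Mapping.lookup m i) (Poly_Mapping.lookup m i))"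
    by (simp add: monom_val_def monom_power)
  also have "\<dots> = monom (monom_val \<alpha> m) (mdeg m)"
    unfolding monom_val_def mdeg_def by (rule prod_monom)
  finally show ?thesis .
qed

lemma line_eval_eq_sum_monom:
  "line_eval \<alpha> p =
    (\<Sum>m\<in>Poly_Mapping.keys p. monom (Poly_Mapping.lookup p m * monom_val \<alpha> m) (mdeg m))"
  by (simp add: line_eval_def eval_hom_def monom_val_line flip: smult_monom)

lemma coeff_line_eval: "coeff (line_eval \<alpha> p) e =
    (\<Sum>m\<in>{m\<in>Poly_Mapping.keys p. mdeg m = e}. Poly_Mapping.lookup p m * monom_val \<alpha> m)"
  by (simp add: line_eval_eq_sum_monom coeff_sum sum.inter_filter eq_commute)

lemma line_eval_homog:
  assumes "homog_of_deg d p"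
  shows "line_eval \<alpha> p = monom (eval p \<alpha>) d"
  using assms unfolding homog_of_deg_def
  by (simp add: line_eval_eq_sum_monom eval_def monom_val_def monom_sum)

lemma sum_keys_lookup_eq_lookup_0:
  fixes p :: "'a::field mpoly"
  assumes "c 0 = 1" and "\<And>m. m \<noteq> 0 \<Longrightarrow> c m = 0"
  shows "(\<Sum>m\<in>Poly_Mapping.keys p. Poly_Mapping.lookup p m * c m) = Poly_Mapping.lookup p 0"
proof -
  have "(\<Sum>m\<in>Poly_Mapping.keys p. Poly_Mapping.lookup p m * c m) =
      (\<Sum>m\<in>Poly_Mapping.keys p. if m = 0 then Poly_Mapping.lookup p m else 0)"
    using assms by (intro sum.cong) auto
  then show ?thesis
    by (simp add: in_keys_iff)
qed

lemma eval_origin: "eval p (\<lambda>_. 0) = Poly_Mapping.lookup p 0"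
  unfolding eval_eq_eval_hom eval_hom_def
proof (rule sum_keys_lookup_eq_lookup_0)
  fix m :: "nat \<Rightarrow>\<^sub>0 nat"
  assume "m \<noteq> 0"
  then obtain i where "i \<in> Poly_Mapping.keys m"
    by (metis keys_eq_empty equals0I)
  then show "monom_val (\<lambda>_. 0::'a) m = 0"
    unfolding monom_val_def by (intro prod_zero) (auto simp: in_keys_iff)
qed (simp add: monom_val_def)

lemma coeff_0_line_eval: "coeff (line_eval \<alpha> p) 0 = Poly_Mapping.lookup p 0"
proof -
  have "coeff (line_eval \<alpha> p) 0 = (\<Sum>m\<in>Poly_Mapping.keys p.
      if mdeg m = 0 then Poly_Mapping.lookup p m * monom_val \<alpha> m else 0)"
    by (simp add: coeff_line_eval sum.inter_filter)
  also have "\<dots> = (\<Sum>m\<in>Poly_Mapping.keys p. Poly_Mapping.lookup p m * (if m = 0 then 1 else 0))"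
    by (rule sum.cong) (auto simp: mdeg_eq_0_iff)
  also have "\<dots> = Poly_Mapping.lookup p 0"
    by (rule sum_keys_lookup_eq_lookup_0) auto
  finally show ?thesis .
qed

section \<open>The graded ring \<open>S\<close> and its ideals\<close>

lemma polyS_0 [simp]: "0 \<in> polyS s"
  by (simp add: polyS_def)

lemma polyS_1 [simp]: "1 \<in> polyS s"
  by (simp add: polyS_def)

lemma polyS_const [simp]: "const c \<in> polyS s"
  by (simp add: polyS_def const_def)

lemma polyS_var: "i < s \<Longrightarrow> var i \<in> polyS s"
  by (simp add: polyS_def var_def)

lemma polyS_add: "p \<in> polyS s \<Longrightarrow> q \<in> polyS s \<Longrightarrow> p + q \<in> polyS s"
  unfolding polyS_def using keys_add[of p q] by blast

lemma polyS_diff: "p \<in> polyS s \<Longrightarrow> q \<in> polyS s \<Longrightarrow> p - q \<in> polyS s"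
  unfolding polyS_def using keys_diff[of p q] by blast

lemma polyS_mult: "p \<in> polyS s \<Longrightarrow> q \<in> polyS s \<Longrightarrow> p * q \<in> polyS s"
  unfolding polyS_def using keys_mult[of p q] by (force simp: keys_plus_eq_union)

lemma polyS_sum: "(\<And>a. a \<in> A \<Longrightarrow> f a \<in> polyS s) \<Longrightarrow> sum f A \<in> polyS s"
  by (induction A rule: infinite_finite_induct) (auto intro: polyS_add)

lemma polyS_prod: "(\<And>a. a \<in> A \<Longrightarrow> f a \<in> polyS s) \<Longrightarrow> prod f A \<in> polyS s"
  by (induction A rule: infinite_finite_induct) (auto intro: polyS_mult)

lemma polyS_power: "p \<in> polyS s \<Longrightarrow> p ^ n \<in> polyS s"
  by (induction n) (auto intro: polyS_mult)

lemma homog_of_deg_const: "homog_of_deg 0 (const c)"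
  by (simp add: homog_of_deg_def const_def mdeg_def)

lemma homog_of_deg_var: "homog_of_deg 1 (var i)"
  by (simp add: homog_of_deg_def var_def mdeg_def)

lemma homog_of_deg_add: "homog_of_deg d p \<Longrightarrow> homog_of_deg d q \<Longrightarrow> homog_of_deg d (p + q)"
  unfolding homog_of_deg_def using keys_add[of p q] by blast

lemma homog_of_deg_diff: "homog_of_deg d p \<Longrightarrow> homog_of_deg d q \<Longrightarrow> homog_of_deg d (p - q)"
  unfolding homog_of_deg_def using keys_diff[of p q] by blast

lemma homog_of_deg_mult:
  "homog_of_deg a p \<Longrightarrow> homog_of_deg b q \<Longrightarrow> homog_of_deg (a + b) (p * q)"
  unfolding homog_of_deg_def using keys_mult[of p q] by (force simp: mdeg_add)

lemma homog_of_deg_const_mult: "homog_of_deg d p \<Longrightarrow> homog_of_deg d (const c * p)"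
  using homog_of_deg_mult[OF homog_of_deg_const] by fastforce

lemma homog_of_deg_0 [simp]: "homog_of_deg d 0"
  by (simp add: homog_of_deg_def)

lemma homog_of_deg_1 [simp]: "homog_of_deg 0 1"
  by (simp add: homog_of_deg_def mdeg_def)

lemma homog_of_deg_sum:
  "(\<And>a. a \<in> A \<Longrightarrow> homog_of_deg d (f a)) \<Longrightarrow> homog_of_deg d (sum f A)"
  by (induction A rule: infinite_finite_induct) (simp_all add: homog_of_deg_add)

lemma homog_of_deg_prod:
  "(\<And>a. a \<in> A \<Longrightarrow> homog_of_deg (d a) (f a)) \<Longrightarrow> homog_of_deg (\<Sum>a\<in>A. d a) (prod f A)"
  by (induction A rule: infinite_finite_induct) (simp_all add: homog_of_deg_mult)

lemma homog_of_deg_power: "homog_of_deg d p \<Longrightarrow> homog_of_deg (n * d) (p ^ n)"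
  by (induction n) (simp_all add: homog_of_deg_mult)

lemma is_ideal_polyS: "is_ideal s (polyS s)"
  by (auto simp: is_ideal_def intro: polyS_add polyS_mult)

lemma is_ideal_ideal_gen: "G \<subseteq> polyS s \<Longrightarrow> is_ideal s (ideal_gen s G)"
  unfolding ideal_gen_def is_ideal_def
  by (intro conjI; use is_ideal_polyS[of s] in \<open>auto simp: is_ideal_def\<close>)

lemma ideal_gen_superset: "G \<subseteq> ideal_gen s G"
  by (auto simp: ideal_gen_def)

lemma ideal_gen_least: "is_ideal s J \<Longrightarrow> G \<subseteq> J \<Longrightarrow> ideal_gen s G \<subseteq> J"
  by (auto simp: ideal_gen_def)

lemma ideal_sum: "is_ideal s J \<Longrightarrow> (\<And>a. a \<in> A \<Longrightarrow> f a \<in> J) \<Longrightarrow> sum f A \<in> J"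
  by (induction A rule: infinite_finite_induct) (auto simp: is_ideal_def)

lemma ideal_mult_right: "is_ideal s J \<Longrightarrow> a \<in> J \<Longrightarrow> h \<in> polyS s \<Longrightarrow> a * h \<in> J"
  by (auto simp: is_ideal_def mult.commute)

lemma ideal_diff:
  assumes J: "is_ideal s J" and "a \<in> J" "b \<in> J"
  shows "a - b \<in> J"
proof -
  have "const (-1) * b \<in> J"
    using assms by (auto simp: is_ideal_def)
  moreover have "const (-1) * b = - b"
    by (simp add: const_def single_uminus)
  ultimately show ?thesis
    using assms by (auto simp: is_ideal_def)
qed

section \<open>The vanishing ideal of a finite set of points\<close>

definition vanishing_on :: "nat \<Rightarrow> (nat \<Rightarrow> 'a::field) set \<Rightarrow> 'a mpoly set" where
  "vanishing_on s Y = {p \<in> polyS s. \<forall>\<alpha>\<in>Y. eval p \<alpha> = 0}"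

definition vanishing_on_lines :: "nat \<Rightarrow> (nat \<Rightarrow> 'a::field) set \<Rightarrow> 'a mpoly set" where
  "vanishing_on_lines s Y = {p \<in> polyS s. \<forall>\<alpha>\<in>Y. line_eval \<alpha> p = 0}"

lemma is_ideal_vanishing_on: "is_ideal s (vanishing_on s Y)"
  by (auto simp: is_ideal_def vanishing_on_def eval_add eval_mult intro: polyS_add polyS_mult)

lemma is_ideal_vanishing_on_lines: "is_ideal s (vanishing_on_lines s Y)"
  by (auto simp: is_ideal_def vanishing_on_lines_def line_eval_add line_eval_mult
      intro: polyS_add polyS_mult)

definition homog_component :: "'a::field mpoly \<Rightarrow> nat \<Rightarrow> 'a mpoly" where
  "homog_component p e =
    (\<Sum>m\<in>{m\<in>Poly_Mapping.keys p. mdeg m = e}. Poly_Mapping.single m (Poly_Mapping.lookup p m))"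

lemma sum_homog_component: "(\<Sum>e\<in>mdeg ` Poly_Mapping.keys p. homog_component p e) = p"
proof -
  have "(\<Sum>e\<in>mdeg ` Poly_Mapping.keys p. homog_component p e) =
      (\<Sum>m\<in>Poly_Mapping.keys p. Poly_Mapping.single m (Poly_Mapping.lookup p m))"
    unfolding homog_component_def by (rule sum.image_gen[symmetric]) simp
  then show ?thesis
    by (simp add: sum_single_lookup)
qed

lemma keys_homog_component: "Poly_Mapping.keys (homog_component p e) \<subseteq> {m\<in>Poly_Mapping.keys p. mdeg m = e}"
  unfolding homog_component_def by (rule order_trans[OF keys_sum]) auto

lemma homog_of_deg_homog_component: "homog_of_deg e (homog_component p e)"
  using keys_homog_component[of p e] unfolding homog_of_deg_def by auto

lemma polyS_homog_component: "p \<in> polyS s \<Longrightarrow> homog_component p e \<in> polyS s"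
  using keys_homog_component[of p e] unfolding polyS_def by auto

lemma eval_homog_component: "eval (homog_component p e) \<alpha> = coeff (line_eval \<alpha> p) e"
  unfolding homog_component_def eval_eq_eval_hom id_coeff.eval_hom_sum coeff_line_eval by simp

lemma is_ideal_vanishing_ideal: "is_ideal s (vanishing_ideal s X)"
  unfolding vanishing_ideal_def by (rule is_ideal_ideal_gen) auto

lemma vanishing_ideal_subset_polyS: "vanishing_ideal s X \<subseteq> polyS s"
  using is_ideal_vanishing_ideal[of s X] by (simp add: is_ideal_def)

lemma form_in_vanishing_ideal:
  "g \<in> polyS s \<Longrightarrow> homogeneous g \<Longrightarrow> \<forall>\<alpha>\<in>X. eval g \<alpha> = 0 \<Longrightarrow> g \<in> vanishing_ideal s X"
  unfolding vanishing_ideal_def by (rule subsetD[OF ideal_gen_superset]) simp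

lemma vanishing_ideal_subset_vanishing_on: "vanishing_ideal s X \<subseteq> vanishing_on s X"
  unfolding vanishing_ideal_def
  by (rule ideal_gen_least[OF is_ideal_vanishing_on]) (auto simp: vanishing_on_def)

theorem vanishing_ideal_eq_vanishing_on_lines: "vanishing_ideal s X = vanishing_on_lines s X"
proof
  show "vanishing_ideal s X \<subseteq> vanishing_on_lines s X"
    unfolding vanishing_ideal_def
  proof (rule ideal_gen_least[OF is_ideal_vanishing_on_lines], safe)
    fix g assume "g \<in> polyS s" "homogeneous g" "\<forall>\<alpha>\<in>X. eval g \<alpha> = 0"
    then show "g \<in> vanishing_on_lines s X"
      by (auto simp: homogeneous_def vanishing_on_lines_def line_eval_homog)
  qed
next
  show "vanishing_on_lines s X \<subseteq> vanishing_ideal s X"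
  proof
    fix p assume p: "p \<in> vanishing_on_lines s X"
    have "homog_component p e \<in> vanishing_ideal s X" for e
      using p homog_of_deg_homog_component[of e p]
      by (intro form_in_vanishing_ideal)
        (auto simp: vanishing_on_lines_def polyS_homog_component homogeneous_def eval_homog_component)
    then have "(\<Sum>e\<in>mdeg ` Poly_Mapping.keys p. homog_component p e) \<in> vanishing_ideal s X"
      by (intro ideal_sum[OF is_ideal_vanishing_ideal])
    then show "p \<in> vanishing_ideal s X"
      by (simp add: sum_homog_component)
  qed
qed

section \<open>Interpolation by forms\<close>

lemma exists_separating_linear_form:
  assumes X: "proj_point_set s X" and "\<beta> \<in> X" "\<gamma> \<in> X" "\<beta> \<noteq> \<gamma>"
  obtains l where "l \<in> polyS s" "homog_of_deg 1 l" "eval l \<gamma> = 0" "eval l \<beta> \<noteq> 0"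
proof -
  from X \<open>\<gamma> \<in> X\<close> obtain j where j: "j < s" "\<gamma> j \<noteq> 0"
    unfolding proj_point_set_def by blast
  have "\<not> (\<forall>i. \<beta> i = \<beta> j / \<gamma> j * \<gamma> i)"
    using assms unfolding proj_point_set_def by metis
  then obtain i where i: "\<beta> i \<noteq> \<beta> j / \<gamma> j * \<gamma> i"
    by blast
  have "i < s"
    using X assms i unfolding proj_point_set_def by (metis linorder_not_less mult_zero_right)
  define l where "l = const (\<gamma> j) * var i - const (\<gamma> i) * var j"
  show ?thesis
  proof
    show "l \<in> polyS s"
      unfolding l_def using \<open>i < s\<close> j by (intro polyS_diff polyS_mult polyS_const polyS_var)
    show "homog_of_deg 1 l"
      unfolding l_def by (intro homog_of_deg_diff homog_of_deg_const_mult homog_of_deg_var)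
    show "eval l \<gamma> = 0"
      unfolding l_def by (simp add: eval_diff eval_mult)
    show "eval l \<beta> \<noteq> 0"
      using i j unfolding l_def by (auto simp: eval_diff eval_mult field_simps)
  qed
qed

text \<open>A product of linear forms separating \<open>\<beta>\<close> from the other points of \<open>Z\<close>, padded to
  degree \<open>e\<close> by a power of a coordinate not vanishing at \<open>\<beta>\<close>.\<close>
lemma exists_lagrange_form:
  assumes X: "proj_point_set s X" and Z: "finite Z" "Z \<subseteq> X" "\<beta> \<in> Z" and e: "card Z - 1 \<le> e"
  obtains L where "L \<in> polyS_deg s e" "eval L \<beta> = 1" "\<forall>\<gamma>\<in>Z - {\<beta>}. eval L \<gamma> = 0"
proof -
  have "\<forall>\<gamma>\<in>Z - {\<beta>}. \<exists>l. l \<in> polyS s \<and> homog_of_deg 1 l \<and> eval l \<gamma> = 0 \<and> eval l \<beta> \<noteq> 0"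
    using exists_separating_linear_form[OF X] Z by (metis DiffE insertI1 subsetD)
  then obtain l where l: "\<And>\<gamma>. \<gamma> \<in> Z - {\<beta>} \<Longrightarrow>
      l \<gamma> \<in> polyS s \<and> homog_of_deg 1 (l \<gamma>) \<and> eval (l \<gamma>) \<gamma> = 0 \<and> eval (l \<gamma>) \<beta> \<noteq> 0"
    by metis
  from X Z obtain k where k: "k < s" "\<beta> k \<noteq> 0"
    unfolding proj_point_set_def by blast
  define P where "P = (\<Prod>\<gamma>\<in>Z - {\<beta>}. l \<gamma>) * var k ^ (e - card (Z - {\<beta>}))"
  have "P \<in> polyS s"
    unfolding P_def using l k by (intro polyS_mult polyS_prod polyS_power polyS_var) auto
  moreover have "homog_of_deg ((\<Sum>\<gamma>\<in>Z - {\<beta>}. 1) + (e - card (Z - {\<beta>})) * 1) P"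
    unfolding P_def using l
    by (intro homog_of_deg_mult homog_of_deg_prod homog_of_deg_power homog_of_deg_var) auto
  then have "homog_of_deg e P"
    using Z e by simp
  moreover have "eval P \<beta> \<noteq> 0"
    unfolding P_def using l k Z by (simp add: eval_mult eval_prod eval_power)
  moreover have "eval P \<gamma> = 0" if "\<gamma> \<in> Z - {\<beta>}" for \<gamma>
    unfolding P_def using that l Z by (auto simp: eval_mult eval_prod prod_zero_iff)
  ultimately show ?thesis
    by (intro that[of "const (1 / eval P \<beta>) * P"])
      (simp_all add: polyS_deg_def polyS_mult homog_of_deg_const_mult eval_mult)
qed

lemma lagrange_forms:
  assumes X: "proj_point_set s X" and Z: "finite Z" "Z \<subseteq> X" and e: "card Z - 1 \<le> e"
  obtains L where "\<And>\<beta>. \<beta> \<in> Z \<Longrightarrow> L \<beta> \<in> polyS_deg s e"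
    and "\<And>\<beta> \<gamma>. \<beta> \<in> Z \<Longrightarrow> \<gamma> \<in> Z \<Longrightarrow> eval (L \<beta>) \<gamma> = (if \<gamma> = \<beta> then 1 else 0)"
proof -
  have "\<forall>\<beta>\<in>Z. \<exists>L. L \<in> polyS_deg s e \<and> eval L \<beta> = 1 \<and> (\<forall>\<gamma>\<in>Z - {\<beta>}. eval L \<gamma> = 0)"
    by (metis exists_lagrange_form[OF X Z _ e])
  then obtain L where "\<And>\<beta>. \<beta> \<in> Z \<Longrightarrow>
      L \<beta> \<in> polyS_deg s e \<and> eval (L \<beta>) \<beta> = 1 \<and> (\<forall>\<gamma>\<in>Z - {\<beta>}. eval (L \<beta>) \<gamma> = 0)"
    by metis
  then show ?thesis
    by (intro that[of L]) auto
qed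

lemma eval_lagrange_sum:
  assumes "finite Z" "\<gamma> \<in> Z"
    and "\<And>\<beta>. \<beta> \<in> Z \<Longrightarrow> eval (L \<beta>) \<gamma> = (if \<gamma> = \<beta> then 1 else 0)"
  shows "eval (\<Sum>\<beta>\<in>Z. const (v \<beta>) * L \<beta>) \<gamma> = v \<gamma>"
proof -
  have "eval (\<Sum>\<beta>\<in>Z. const (v \<beta>) * L \<beta>) \<gamma> = (\<Sum>\<beta>\<in>Z. if \<gamma> = \<beta> then v \<beta> else 0)"
    unfolding eval_sum using assms by (intro sum.cong) (auto simp: eval_mult)
  then show ?thesis
    using assms by simp
qed

lemma exists_form_with_values:
  assumes X: "proj_point_set s X" and Z: "finite Z" "Z \<subseteq> X" and e: "card Z - 1 \<le> e"
  obtains a where "a \<in> polyS_deg s e" "\<forall>\<beta>\<in>Z. eval a \<beta> = v \<beta>"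
proof -
  obtain L where L1: "\<And>\<beta>. \<beta> \<in> Z \<Longrightarrow> L \<beta> \<in> polyS_deg s e"
    and L2: "\<And>\<beta> \<gamma>. \<beta> \<in> Z \<Longrightarrow> \<gamma> \<in> Z \<Longrightarrow> eval (L \<beta>) \<gamma> = (if \<gamma> = \<beta> then 1 else 0)"
    using lagrange_forms[OF X Z e] by blast
  show ?thesis
  proof
    show "(\<Sum>\<beta>\<in>Z. const (v \<beta>) * L \<beta>) \<in> polyS_deg s e"
      using L1 unfolding polyS_deg_def
      by (auto intro!: polyS_sum polyS_mult homog_of_deg_sum homog_of_deg_const_mult)
    show "\<forall>\<gamma>\<in>Z. eval (\<Sum>\<beta>\<in>Z. const (v \<beta>) * L \<beta>) \<gamma> = v \<gamma>"
      using L2 Z by (auto intro: eval_lagrange_sum)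
  qed
qed

section \<open>The colon ideal\<close>

lemma colon_vanishing_ideal_eq:
  assumes f: "f \<in> polyS s" "homog_of_deg d f" and no_zeros: "zero_set X f = {}"
  shows "colon s (vanishing_ideal s X) f = vanishing_ideal s X"
proof
  show "vanishing_ideal s X \<subseteq> colon s (vanishing_ideal s X) f"
    using vanishing_ideal_subset_polyS ideal_mult_right[OF is_ideal_vanishing_ideal _ f(1)]
    by (auto simp: colon_def)
next
  show "colon s (vanishing_ideal s X) f \<subseteq> vanishing_ideal s X"
  proof
    fix h assume "h \<in> colon s (vanishing_ideal s X) f"
    then have h: "h \<in> polyS s" "\<forall>\<alpha>\<in>X. line_eval \<alpha> h * line_eval \<alpha> f = 0"
      by (auto simp: colon_def vanishing_ideal_eq_vanishing_on_lines vanishing_on_lines_def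
          line_eval_mult)
    have "line_eval \<alpha> f \<noteq> 0" if "\<alpha> \<in> X" for \<alpha>
      using no_zeros that by (auto simp: zero_set_def line_eval_homog[OF f(2)])
    with h show "h \<in> vanishing_ideal s X"
      by (auto simp: vanishing_ideal_eq_vanishing_on_lines vanishing_on_lines_def)
  qed
qed

lemma colon_vanishing_ideal_ne:
  assumes X: "finite X" "proj_point_set s X"
    and f: "f \<in> polyS s" "homog_of_deg d f" and \<alpha>: "\<alpha> \<in> zero_set X f"
  shows "colon s (vanishing_ideal s X) f \<noteq> vanishing_ideal s X"
proof -
  have "\<alpha> \<in> X" "eval f \<alpha> = 0"
    using \<alpha> by (auto simp: zero_set_def)
  then obtain h where h: "h \<in> polyS s" "homog_of_deg (card X - 1) h" "eval h \<alpha> = 1"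
    "\<forall>\<gamma>\<in>X - {\<alpha>}. eval h \<gamma> = 0"
    using exists_lagrange_form[OF X(2) X(1) subset_refl] unfolding polyS_deg_def by blast
  have "h * f \<in> vanishing_ideal s X"
  proof (rule form_in_vanishing_ideal)
    show "h * f \<in> polyS s"
      using h f by (intro polyS_mult)
    show "homogeneous (h * f)"
      using homog_of_deg_mult[OF h(2) f(2)] by (auto simp: homogeneous_def)
    show "\<forall>\<gamma>\<in>X. eval (h * f) \<gamma> = 0"
      using h(4) \<open>eval f \<alpha> = 0\<close> by (auto simp: eval_mult)
  qed
  then have "h \<in> colon s (vanishing_ideal s X) f"
    using h by (simp add: colon_def)
  moreover have "h \<notin> vanishing_ideal s X"
    using vanishing_ideal_subset_vanishing_on h(3) \<open>\<alpha> \<in> X\<close> by (fastforce simp: vanishing_on_def)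
  ultimately show ?thesis
    by blast
qed

lemma colon_vanishing_ideal_ne_iff:
  assumes "finite X" "proj_point_set s X" "f \<in> polyS s" "homog_of_deg d f"
  shows "colon s (vanishing_ideal s X) f \<noteq> vanishing_ideal s X \<longleftrightarrow> zero_set X f \<noteq> {}"
  using assms colon_vanishing_ideal_eq colon_vanishing_ideal_ne by blast

section \<open>The Hilbert function of \<open>S/(I(X),f)\<close>\<close>

definition fun_scale :: "'a::field \<Rightarrow> ('x \<Rightarrow> 'a) \<Rightarrow> 'x \<Rightarrow> 'a" where
  "fun_scale c v = (\<lambda>x. c * v x)"

interpretation fun_vs: vector_space "fun_scale :: 'a::field \<Rightarrow> ('x \<Rightarrow> 'a) \<Rightarrow> _"
  by unfold_locales (auto simp: fun_scale_def fun_eq_iff algebra_simps)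

lemma sum_apply: "(\<Sum>a\<in>A. f a) x = (\<Sum>a\<in>A. f a x :: 'b::comm_monoid_add)"
  by (induction A rule: infinite_finite_induct) auto

lemma independent_indicator_functions:
  "fun_vs.independent ((\<lambda>\<beta> \<gamma>. if \<gamma> = \<beta> then 1 else 0 :: 'a::field) ` Y)"
  unfolding fun_vs.independent_explicit_finite_subsets
proof (intro allI impI ballI)
  fix T u v
  assume T: "T \<subseteq> (\<lambda>\<beta> \<gamma>. if \<gamma> = \<beta> then 1 else 0 :: 'a) ` Y" "finite T"
    and sum_eq_0: "(\<Sum>w\<in>T. fun_scale (u w) w) = 0" and "v \<in> T"
  then obtain \<beta> where v: "v = (\<lambda>\<gamma>. if \<gamma> = \<beta> then 1 else 0)"
    by blast
  have unit: "w \<beta> = (if w = v then 1 else 0)" if "w \<in> T" for w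
    using that T(1) v by auto
  have "(\<Sum>w\<in>T. fun_scale (u w) w) \<beta> = (\<Sum>w\<in>T. if w = v then u w else 0)"
    unfolding sum_apply fun_scale_def by (rule sum.cong) (simp_all add: unit)
  then show "u v = 0"
    using sum_eq_0 T(2) \<open>v \<in> T\<close> by simp
qed

text \<open>Point evaluations on \<open>Y\<close> map \<open>lin_span (B \<union> W)\<close> onto the span of the images of \<open>B\<close>,
  and the images of the \<open>L \<beta>\<close> are the independent indicator functions of the points of \<open>Y\<close>.\<close>
lemma card_le_of_dual_in_lin_span:
  fixes Y :: "(nat \<Rightarrow> 'a::field) set"
  assumes "finite B"
    and L_span: "\<And>\<beta>. \<beta> \<in> Y \<Longrightarrow> L \<beta> \<in> lin_span (B \<union> W)"
    and L_dual: "\<And>\<beta> \<gamma>. \<beta> \<in> Y \<Longrightarrow> \<gamma> \<in> Y \<Longrightarrow> eval (L \<beta>) \<gamma> = (if \<gamma> = \<beta> then 1 else 0)"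
    and W: "\<And>w \<beta>. w \<in> W \<Longrightarrow> \<beta> \<in> Y \<Longrightarrow> eval w \<beta> = 0"
  shows "card Y \<le> card B"
proof -
  define restr :: "'a mpoly \<Rightarrow> (nat \<Rightarrow> 'a) \<Rightarrow> 'a" where
    "restr a = (\<lambda>\<gamma>. if \<gamma> \<in> Y then eval a \<gamma> else 0)" for a
  define ind :: "(nat \<Rightarrow> 'a) \<Rightarrow> (nat \<Rightarrow> 'a) \<Rightarrow> 'a" where
    "ind \<beta> = (\<lambda>\<gamma>. if \<gamma> = \<beta> then 1 else 0)" for \<beta>
  have restr_L: "restr (L \<beta>) = ind \<beta>" if "\<beta> \<in> Y" for \<beta>
    using L_dual[OF that] that by (auto simp: restr_def ind_def)
  have "restr a \<in> fun_vs.span (restr ` B)" if "a \<in> lin_span (B \<union> W)" for a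
  proof -
    from that obtain A c where a: "a = (\<Sum>b\<in>A. const (c b) * b)" "finite A" "A \<subseteq> B \<union> W"
      unfolding lin_span_def by blast
    have "restr a = (\<Sum>b\<in>A. fun_scale (c b) (restr b))"
      unfolding a(1) restr_def by (auto simp: sum_apply fun_scale_def eval_sum eval_mult)
    also have "\<dots> \<in> fun_vs.span (restr ` B)"
    proof (rule fun_vs.span_sum)
      fix b assume "b \<in> A"
      show "fun_scale (c b) (restr b) \<in> fun_vs.span (restr ` B)"
      proof (cases "b \<in> B")
        case False
        then have "restr b = 0"
          using \<open>b \<in> A\<close> a(3) W by (auto simp: restr_def fun_eq_iff)
        then show ?thesis
          using fun_vs.span_zero by (simp add: fun_scale_def zero_fun_def)
      qed (intro fun_vs.span_scale fun_vs.span_base; simp)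
    qed
    finally show ?thesis .
  qed
  then have ind_span: "ind ` Y \<subseteq> fun_vs.span (restr ` B)"
    using L_span restr_L by force
  have "card Y = card (ind ` Y)"
  proof (rule card_image[symmetric], rule inj_onI)
    fix \<beta> \<gamma> assume "ind \<beta> = ind \<gamma>"
    then have "ind \<beta> \<beta> = ind \<gamma> \<beta>"
      by simp
    then show "\<beta> = \<gamma>"
      by (simp add: ind_def split: if_splits)
  qed
  also have "\<dots> \<le> card (restr ` B)"
    using fun_vs.independent_span_bound[OF finite_imageI[OF \<open>finite B\<close>]]
      independent_indicator_functions[of Y] ind_span unfolding ind_def by blast
  also have "\<dots> \<le> card B"
    using \<open>finite B\<close> by (rule card_image_le)
  finally show ?thesis .
qed

definition forms_vanishing_on :: "nat \<Rightarrow> (nat \<Rightarrow> 'a::field) set \<Rightarrow> nat \<Rightarrow> 'a mpoly set" where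
  "forms_vanishing_on s Y d = {g \<in> polyS_deg s d. \<forall>\<beta>\<in>Y. eval g \<beta> = 0}"

lemma polyS_deg_subset_lin_span:
  fixes Y :: "(nat \<Rightarrow> 'a::field) set"
  assumes Y: "finite Y" and inj: "inj_on L Y"
    and L_deg: "\<And>\<beta>. \<beta> \<in> Y \<Longrightarrow> L \<beta> \<in> polyS_deg s d"
    and L_dual: "\<And>\<beta> \<gamma>. \<beta> \<in> Y \<Longrightarrow> \<gamma> \<in> Y \<Longrightarrow> eval (L \<beta>) \<gamma> = (if \<gamma> = \<beta> then 1 else 0)"
  shows "polyS_deg s d \<subseteq> lin_span (L ` Y \<union> forms_vanishing_on s Y d)"
proof
  fix g :: "'a mpoly" assume g: "g \<in> polyS_deg s d"
  define w where "w = g - (\<Sum>\<beta>\<in>Y. const (eval g \<beta>) * L \<beta>)"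
  have eval_w: "eval w \<gamma> = 0" if "\<gamma> \<in> Y" for \<gamma>
    unfolding w_def eval_diff using eval_lagrange_sum[OF Y that, of L] L_dual that by simp
  have "w \<in> polyS s" "homog_of_deg d w"
    unfolding w_def using g L_deg
    by (auto simp: polyS_deg_def intro!: polyS_diff polyS_sum polyS_mult
        homog_of_deg_diff homog_of_deg_sum homog_of_deg_const_mult)
  with eval_w have w: "w \<in> forms_vanishing_on s Y d"
    by (simp add: forms_vanishing_on_def polyS_deg_def)
  have "w \<notin> L ` Y"
    using eval_w L_dual by force
  define c where "c a = (if a = w then 1 else eval g (inv_into Y L a))" for a
  have "(\<Sum>a\<in>insert w (L ` Y). const (c a) * a) = w + (\<Sum>a\<in>L ` Y. const (c a) * a)"
    using Y \<open>w \<notin> L ` Y\<close> by (simp add: c_def const_def)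
  also have "(\<Sum>a\<in>L ` Y. const (c a) * a) = (\<Sum>\<beta>\<in>Y. const (c (L \<beta>)) * L \<beta>)"
    by (simp add: sum.reindex[OF inj])
  also have "\<dots> = (\<Sum>\<beta>\<in>Y. const (eval g \<beta>) * L \<beta>)"
    using \<open>w \<notin> L ` Y\<close> by (intro sum.cong) (auto simp: c_def inv_into_f_f[OF inj])
  finally have "g = (\<Sum>a\<in>insert w (L ` Y). const (c a) * a)"
    by (simp add: w_def)
  with Y w show "g \<in> lin_span (L ` Y \<union> forms_vanishing_on s Y d)"
    unfolding lin_span_def by blast
qed

theorem quot_dim_forms_vanishing_on:
  assumes X: "proj_point_set s X" and Y: "finite Y" "Y \<subseteq> X" and d: "card Y - 1 \<le> d"
  shows "quot_dim (polyS_deg s d) (forms_vanishing_on s Y d) = card Y"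
proof -
  let ?W = "forms_vanishing_on s Y d"
  obtain L where L_deg: "\<And>\<beta>. \<beta> \<in> Y \<Longrightarrow> L \<beta> \<in> polyS_deg s d"
    and L_dual: "\<And>\<beta> \<gamma>. \<beta> \<in> Y \<Longrightarrow> \<gamma> \<in> Y \<Longrightarrow> eval (L \<beta>) \<gamma> = (if \<gamma> = \<beta> then 1 else 0)"
    using lagrange_forms[OF X Y d] by blast
  have inj: "inj_on L Y"
    by (rule inj_onI) (metis L_dual zero_neq_one)
  have spanning: "\<exists>B. finite B \<and> card B = card Y \<and> B \<subseteq> polyS_deg s d \<and>
      polyS_deg s d \<subseteq> lin_span (B \<union> ?W)"
  proof (intro exI conjI)
    show "finite (L ` Y)" "card (L ` Y) = card Y" "L ` Y \<subseteq> polyS_deg s d"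
      using Y(1) card_image[OF inj] L_deg by auto
    show "polyS_deg s d \<subseteq> lin_span (L ` Y \<union> ?W)"
      by (rule polyS_deg_subset_lin_span[OF Y(1) inj L_deg L_dual])
  qed
  have minimal: "card Y \<le> n"
    if "\<exists>B. finite B \<and> card B = n \<and> B \<subseteq> polyS_deg s d \<and> polyS_deg s d \<subseteq> lin_span (B \<union> ?W)"
    for n
  proof -
    from that obtain B where B: "finite B" "card B = n" "polyS_deg s d \<subseteq> lin_span (B \<union> ?W)"
      by blast
    have "card Y \<le> card B"
      by (rule card_le_of_dual_in_lin_span[OF B(1), of Y L ?W])
        (use L_deg L_dual B(3) in \<open>auto simp: forms_vanishing_on_def\<close>)
    with B(2) show ?thesis
      by simp
  qed
  show ?thesis
    unfolding quot_dim_def using spanning minimal by (rule Least_equality)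
qed

lemma ideal_gen_insert_subset_vanishing_on:
  assumes "f \<in> polyS s"
  shows "ideal_gen s (insert f (vanishing_ideal s X)) \<subseteq> vanishing_on s (zero_set X f)"
proof (rule ideal_gen_least[OF is_ideal_vanishing_on])
  have "vanishing_on s X \<subseteq> vanishing_on s (zero_set X f)"
    by (auto simp: vanishing_on_def zero_set_def)
  with assms vanishing_ideal_subset_vanishing_on
  show "insert f (vanishing_ideal s X) \<subseteq> vanishing_on s (zero_set X f)"
    by (auto simp: vanishing_on_def zero_set_def)
qed

text \<open>Interpolate \<open>g / f\<close> at the points of \<open>X\<close> where \<open>f\<close> does not vanish by a form \<open>a\<close>:
  then \<open>g - a f\<close> vanishes on all of \<open>X\<close>.\<close>
lemma forms_vanishing_on_subset_ideal_gen_insert: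
  assumes X: "finite X" "proj_point_set s X"
    and f: "f \<in> polyS s" "homog_of_deg df f" and d: "df + card X \<le> d"
  shows "forms_vanishing_on s (zero_set X f) d \<subseteq> ideal_gen s (insert f (vanishing_ideal s X))"
proof
  let ?J = "ideal_gen s (insert f (vanishing_ideal s X))"
  fix g assume g: "g \<in> forms_vanishing_on s (zero_set X f) d"
  let ?Z = "X - zero_set X f"
  have "card ?Z - 1 \<le> d - df"
    using d card_mono[OF X(1), of ?Z] by auto
  then obtain a where a: "a \<in> polyS_deg s (d - df)" "\<forall>\<beta>\<in>?Z. eval a \<beta> = eval g \<beta> / eval f \<beta>"
    using exists_form_with_values[OF X(2) finite_Diff[OF X(1)] Diff_subset,
        where v = "\<lambda>\<beta>. eval g \<beta> / eval f \<beta>"] by blast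
  have "homog_of_deg (d - df + df) (a * f)"
    using a(1) f(2) by (simp add: polyS_deg_def homog_of_deg_mult)
  then have "g - a * f \<in> polyS s" "homog_of_deg d (g - a * f)"
    using g a(1) f d
    by (auto simp: forms_vanishing_on_def polyS_deg_def
        intro: polyS_diff polyS_mult homog_of_deg_diff)
  moreover have "eval (g - a * f) \<gamma> = 0" if "\<gamma> \<in> X" for \<gamma>
    using g a(2) that by (cases "eval f \<gamma> = 0")
      (auto simp: eval_diff eval_mult forms_vanishing_on_def zero_set_def)
  ultimately have "g - a * f \<in> vanishing_ideal s X"
    by (intro form_in_vanishing_ideal) (auto simp: homogeneous_def)
  moreover have "is_ideal s ?J"
    using f(1) vanishing_ideal_subset_polyS by (intro is_ideal_ideal_gen) auto
  moreover have "f \<in> ?J" "vanishing_ideal s X \<subseteq> ?J"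
    using ideal_gen_superset by blast+
  ultimately have "g - a * f \<in> ?J" "a * f \<in> ?J" "is_ideal s ?J"
    using a(1) by (auto simp: is_ideal_def polyS_deg_def)
  then have "(g - a * f) + a * f \<in> ?J"
    unfolding is_ideal_def by blast
  then show "g \<in> ?J"
    by simp
qed

lemma ideal_gen_insert_inter_polyS_deg:
  assumes "finite X" "proj_point_set s X"
    and "f \<in> polyS s" "homog_of_deg df f" "df + card X \<le> d"
  shows "ideal_gen s (insert f (vanishing_ideal s X)) \<inter> polyS_deg s d =
    forms_vanishing_on s (zero_set X f) d"
  using ideal_gen_insert_subset_vanishing_on[OF assms(3), of X]
    forms_vanishing_on_subset_ideal_gen_insert[OF assms]
  by (auto simp: forms_vanishing_on_def polyS_deg_def vanishing_on_def)

theorem hilbert_fun_ideal_gen_insert: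
  assumes "finite X" "proj_point_set s X"
    and "f \<in> polyS s" "homog_of_deg df f" "df + card X \<le> d"
  shows "hilbert_fun s (ideal_gen s (insert f (vanishing_ideal s X))) d = card (zero_set X f)"
proof -
  have "zero_set X f \<subseteq> X"
    by (auto simp: zero_set_def)
  moreover have "card (zero_set X f) - 1 \<le> d"
    using assms(1,5) card_mono[OF assms(1) \<open>zero_set X f \<subseteq> X\<close>] by linarith
  ultimately show ?thesis
    unfolding hilbert_fun_def ideal_gen_insert_inter_polyS_deg[OF assms]
    using assms(1,2) by (intro quot_dim_forms_vanishing_on) (auto intro: finite_subset)
qed

section \<open>The Krull dimension of \<open>S/(I(X),f)\<close>\<close>

lemma line_eval_surj:
  assumes "k < s" "\<alpha> k \<noteq> 0"
  shows "\<exists>p\<in>polyS s. line_eval \<alpha> p = w"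
proof (induction w)
  case 0
  show ?case
    by (intro bexI[of _ 0]) auto
next
  case (pCons c w)
  then obtain p where p: "p \<in> polyS s" "line_eval \<alpha> p = w"
    by blast
  have "[:1 / \<alpha> k:] * [:0, \<alpha> k:] = [:0, 1:]"
    using assms by (simp add: pCons_one)
  then have "line_eval \<alpha> (const c + const (1 / \<alpha> k) * var k * p) = [:c:] + [:0, 1:] * w"
    by (simp add: line_eval_add line_eval_mult p(2) mult.assoc)
  also have "\<dots> = pCons c w"
    by simp
  finally show ?case
    using assms p by (intro bexI[of _ "const c + const (1 / \<alpha> k) * var k * p"])
      (auto intro!: polyS_add polyS_mult polyS_var)
qed

lemma one_notin_prime_ideal:
  assumes "is_prime_ideal s P"
  shows "1 \<notin> P"
proof
  assume "1 \<in> P"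
  with assms have "h * 1 \<in> P" if "h \<in> polyS s" for h
    using that by (auto simp: is_prime_ideal_def is_ideal_def)
  with assms show False
    by (auto simp: is_prime_ideal_def is_ideal_def)
qed

lemma prod_notin_prime_ideal:
  assumes P: "is_prime_ideal s P" and g: "\<And>a. a \<in> A \<Longrightarrow> g a \<in> polyS s - P"
  shows "prod g A \<notin> P"
  using g
proof (induction A rule: infinite_finite_induct)
  case (insert x F)
  then have "prod g F \<in> polyS s"
    by (intro polyS_prod) auto
  with insert P show ?case
    unfolding is_prime_ideal_def by auto
qed (use one_notin_prime_ideal[OF P] in auto)

lemma mem_ideal_if_line_eval_eq:
  assumes P: "is_ideal s P" "vanishing_on_lines s {\<alpha>} \<subseteq> P"
    and "x \<in> polyS s" "y \<in> P" "line_eval \<alpha> x = line_eval \<alpha> y"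
  shows "x \<in> P"
proof -
  have "y \<in> polyS s"
    using P(1) \<open>y \<in> P\<close> by (auto simp: is_ideal_def)
  then have "x - y \<in> vanishing_on_lines s {\<alpha>}"
    using assms by (simp add: vanishing_on_lines_def line_eval_diff polyS_diff)
  then have "x - y \<in> P"
    using P(2) by blast
  then have "(x - y) + y \<in> P"
    using P(1) \<open>y \<in> P\<close> unfolding is_ideal_def by blast
  then show ?thesis
    by simp
qed

text \<open>Via \<open>line_eval \<alpha>\<close>, \<open>S/I(K\<alpha>)\<close> is the principal ideal domain \<open>K[t]\<close>; so the ideals above \<open>I(K\<alpha>)\<close>
  are the preimages of principal ideals, generated by an element of least degree.\<close>
lemma ideal_above_line_ideal_principal:
  assumes k: "k < s" "\<alpha> k \<noteq> 0" and P: "is_ideal s P" "vanishing_on_lines s {\<alpha>} \<subset> P"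
  obtains q where "q \<in> P" "line_eval \<alpha> q \<noteq> 0"
    "P = {p \<in> polyS s. line_eval \<alpha> q dvd line_eval \<alpha> p}"
proof -
  have P_S: "P \<subseteq> polyS s"
    using P(1) by (simp add: is_ideal_def)
  obtain a where "a \<in> P" "line_eval \<alpha> a \<noteq> 0"
    using P(2) P_S by (auto simp: vanishing_on_lines_def)
  then obtain q where q: "q \<in> P" "line_eval \<alpha> q \<noteq> 0"
    and least: "\<And>p. p \<in> P \<Longrightarrow> line_eval \<alpha> p \<noteq> 0 \<Longrightarrow> degree (line_eval \<alpha> q) \<le> degree (line_eval \<alpha> p)"
    using ex_has_least_nat[of "\<lambda>p. p \<in> P \<and> line_eval \<alpha> p \<noteq> 0" a "\<lambda>p. degree (line_eval \<alpha> p)"]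
    by blast
  have "line_eval \<alpha> q dvd line_eval \<alpha> p" if p: "p \<in> P" for p
  proof (rule ccontr)
    assume "\<not> line_eval \<alpha> q dvd line_eval \<alpha> p"
    then have rem: "line_eval \<alpha> p mod line_eval \<alpha> q \<noteq> 0"
      by (simp add: mod_eq_0_iff_dvd)
    obtain r where r: "r \<in> polyS s" "line_eval \<alpha> r = line_eval \<alpha> p div line_eval \<alpha> q"
      using line_eval_surj[of k s \<alpha>, OF k] by blast
    have "p - r * q \<in> P"
      using P(1) p q r by (intro ideal_diff) (auto simp: is_ideal_def)
    moreover have "line_eval \<alpha> (p - r * q) = line_eval \<alpha> p mod line_eval \<alpha> q"
      using mod_div_mult_eq[of "line_eval \<alpha> p" "line_eval \<alpha> q"]
      by (simp add: line_eval_diff line_eval_mult r(2) algebra_simps)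
    ultimately have "degree (line_eval \<alpha> q) \<le> degree (line_eval \<alpha> p mod line_eval \<alpha> q)"
      using least rem by metis
    moreover have "degree (line_eval \<alpha> p mod line_eval \<alpha> q) < degree (line_eval \<alpha> q)"
      using q(2) rem by (intro degree_mod_less') auto
    ultimately show False
      by simp
  qed
  moreover have "p \<in> P" if p: "p \<in> polyS s" and dvd: "line_eval \<alpha> q dvd line_eval \<alpha> p" for p
  proof -
    obtain w where w: "line_eval \<alpha> p = line_eval \<alpha> q * w"
      using dvd by blast
    obtain r where r: "r \<in> polyS s" "line_eval \<alpha> r = w"
      using line_eval_surj[of k s \<alpha>, OF k] by blast
    show ?thesis
      using P(2) ideal_mult_right[OF P(1) q(1) r(1)] w r(2)
      by (intro mem_ideal_if_line_eval_eq[OF P(1) _ p, where y = "q * r"])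
        (auto simp: line_eval_mult)
  qed
  ultimately show ?thesis
    using that q P_S by blast
qed

lemma no_prime_chain_above_line_ideal:
  assumes k: "k < s" "\<alpha> k \<noteq> 0"
    and prime: "is_prime_ideal s P1" "is_prime_ideal s P2"
    and chain: "vanishing_on_lines s {\<alpha>} \<subset> P1" "P1 \<subset> P2"
  shows False
proof -
  have ideal: "is_ideal s P1" "is_ideal s P2"
    using prime by (auto simp: is_prime_ideal_def)
  obtain q1 where q1: "q1 \<in> P1" "line_eval \<alpha> q1 \<noteq> 0"
    and P1: "P1 = {p \<in> polyS s. line_eval \<alpha> q1 dvd line_eval \<alpha> p}"
    using ideal_above_line_ideal_principal[of k s \<alpha>, OF k ideal(1) chain(1)] by blast
  obtain q2 where q2: "q2 \<in> P2"
    and P2: "P2 = {p \<in> polyS s. line_eval \<alpha> q2 dvd line_eval \<alpha> p}"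
    using ideal_above_line_ideal_principal[of k s \<alpha>, OF k ideal(2)] chain by blast
  have "q1 \<in> P2"
    using q1 chain(2) by blast
  then obtain h where h: "line_eval \<alpha> q1 = line_eval \<alpha> q2 * h"
    using P2 by blast
  obtain r where r: "r \<in> polyS s" "line_eval \<alpha> r = h"
    using line_eval_surj[of k s \<alpha>, OF k] by blast
  have "q2 \<in> polyS s"
    using q2 P2 by blast
  with r h have "q2 * r \<in> P1"
    by (subst P1) (auto simp: line_eval_mult intro: polyS_mult)
  then have "q2 \<in> P1 \<or> r \<in> P1"
    using prime(1) r(1) \<open>q2 \<in> polyS s\<close> by (simp add: is_prime_ideal_def)
  then show False
  proof
    assume "q2 \<in> P1"
    then have "P2 \<subseteq> P1"
      using P1 P2 dvd_trans by blast
    with chain(2) show False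
      by blast
  next
    assume "r \<in> P1"
    then obtain z where "h = line_eval \<alpha> q1 * z"
      using P1 r(2) by blast
    with h q1(2) have "line_eval \<alpha> q2 * z = 1"
      by (metis mult.left_commute mult.right_neutral mult_left_cancel)
    then have "1 \<in> P2"
      using P2 by (auto intro: dvdI)
    with one_notin_prime_ideal[OF prime(2)] show False
      by blast
  qed
qed

lemma is_prime_ideal_vanishing_on_lines: "is_prime_ideal s (vanishing_on_lines s {\<alpha>})"
  unfolding is_prime_ideal_def
proof (intro conjI)
  show "is_ideal s (vanishing_on_lines s {\<alpha>})"
    by (rule is_ideal_vanishing_on_lines)
  have "1 \<notin> vanishing_on_lines s {\<alpha>}"
    by (simp add: vanishing_on_lines_def)
  then show "vanishing_on_lines s {\<alpha>} \<noteq> polyS s"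
    by auto
qed (auto simp: vanishing_on_lines_def line_eval_mult)

lemma is_prime_ideal_vanishing_at_origin: "is_prime_ideal s (vanishing_on s {\<lambda>_. 0})"
  unfolding is_prime_ideal_def
proof (intro conjI)
  show "is_ideal s (vanishing_on s {\<lambda>_. 0})"
    by (rule is_ideal_vanishing_on)
  have "1 \<notin> vanishing_on s {\<lambda>_. 0::'a}"
    by (simp add: vanishing_on_def)
  then show "vanishing_on s {\<lambda>_. 0::'a} \<noteq> polyS s"
    by auto
qed (auto simp: vanishing_on_def eval_mult)

lemma vanishing_on_lines_psubset_vanishing_at_origin:
  assumes "k < s" "\<alpha> k \<noteq> 0"
  shows "vanishing_on_lines s {\<alpha>} \<subset> vanishing_on s {\<lambda>_. 0}"
proof
  show "vanishing_on_lines s {\<alpha>} \<subseteq> vanishing_on s {\<lambda>_. 0}"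
    using coeff_0_line_eval[of \<alpha>]
    by (auto simp: vanishing_on_lines_def vanishing_on_def eval_origin) (metis coeff_0)
  have "var k \<in> vanishing_on s {\<lambda>_. 0}" "var k \<notin> vanishing_on_lines s {\<alpha>}"
    using assms by (simp_all add: vanishing_on_def vanishing_on_lines_def polyS_var)
  then show "vanishing_on_lines s {\<alpha>} \<noteq> vanishing_on s {\<lambda>_. 0}"
    by blast
qed

text \<open>Otherwise \<open>P\<close> would avoid a product of elements \<open>g\<^sub>\<alpha> \<in> I(K\<alpha>) - P\<close>, \<open>\<alpha> \<in> X\<close>,
  which lies in \<open>I(X)\<close>.\<close>
lemma prime_above_vanishing_ideal:
  assumes X: "finite X" and P: "is_prime_ideal s P" "vanishing_ideal s X \<subseteq> P"
  shows "\<exists>\<alpha>\<in>X. vanishing_on_lines s {\<alpha>} \<subseteq> P"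
proof (rule ccontr)
  assume "\<not> (\<exists>\<alpha>\<in>X. vanishing_on_lines s {\<alpha>} \<subseteq> P)"
  then have "\<forall>\<alpha>\<in>X. \<exists>g. g \<in> vanishing_on_lines s {\<alpha>} - P"
    by blast
  then obtain g where g: "\<And>\<alpha>. \<alpha> \<in> X \<Longrightarrow> g \<alpha> \<in> vanishing_on_lines s {\<alpha>} - P"
    by metis
  then have "prod g X \<notin> P"
    by (intro prod_notin_prime_ideal[OF P(1)]) (auto simp: vanishing_on_lines_def)
  moreover have "prod g X \<in> polyS s"
    using g by (intro polyS_prod) (auto simp: vanishing_on_lines_def)
  moreover have "line_eval \<beta> (prod g X) = 0" if "\<beta> \<in> X" for \<beta>
  proof -
    have "line_eval \<beta> (g \<beta>) = 0"
      using g[OF that] by (simp add: vanishing_on_lines_def)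
    then show ?thesis
      using X that by (auto simp: line_eval_prod prod_zero_iff)
  qed
  ultimately have "prod g X \<in> vanishing_on_lines s X - P"
    by (simp add: vanishing_on_lines_def)
  then show False
    using P(2) by (auto simp: vanishing_ideal_eq_vanishing_on_lines)
qed

lemma krull_dim_quot_eq_1:
  assumes chain: "\<exists>P0 P1. is_prime_ideal s P0 \<and> is_prime_ideal s P1 \<and> J \<subseteq> P0 \<and> P0 \<subset> P1"
    and no_chain: "\<And>P0 P1 P2. is_prime_ideal s P0 \<Longrightarrow> is_prime_ideal s P1 \<Longrightarrow> is_prime_ideal s P2 \<Longrightarrow>
      J \<subseteq> P0 \<Longrightarrow> P0 \<subset> P1 \<Longrightarrow> P1 \<subset> P2 \<Longrightarrow> False"
  shows "krull_dim_quot s J = 1"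
proof -
  let ?K = "{k. \<exists>P :: nat \<Rightarrow> 'a mpoly set.
      (\<forall>i\<le>k. is_prime_ideal s (P i)) \<and> J \<subseteq> P 0 \<and> (\<forall>i<k. P i \<subset> P (Suc i))}"
  have "1 \<in> ?K"
  proof -
    from chain obtain P0 P1 where "is_prime_ideal s P0" "is_prime_ideal s P1" "J \<subseteq> P0" "P0 \<subset> P1"
      by blast
    then show ?thesis
      by (intro CollectI exI[of _ "\<lambda>i. if i = 0 then P0 else P1"]) (auto simp: le_Suc_eq)
  qed
  moreover have "k \<le> 1" if "k \<in> ?K" for k
  proof (rule ccontr)
    assume "\<not> k \<le> 1"
    from that obtain P where "\<forall>i\<le>k. is_prime_ideal s (P i)" "J \<subseteq> P 0" "\<forall>i<k. P i \<subset> P (Suc i)"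
      by blast
    with \<open>\<not> k \<le> 1\<close> show False
      using no_chain[of "P 0" "P 1" "P 2"] by (simp add: numeral_2_eq_2)
  qed
  ultimately show ?thesis
    unfolding krull_dim_quot_def by (intro cSup_eq_maximum) auto
qed

theorem krull_dim_quot_ideal_gen_insert:
  assumes X: "finite X" "proj_point_set s X"
    and f: "f \<in> polyS s" "homog_of_deg df f" and zeros: "zero_set X f \<noteq> {}"
  shows "krull_dim_quot s (ideal_gen s (insert f (vanishing_ideal s X))) = 1"
proof (rule krull_dim_quot_eq_1)
  let ?J = "ideal_gen s (insert f (vanishing_ideal s X))"
  from zeros obtain \<alpha> where \<alpha>: "\<alpha> \<in> X" "eval f \<alpha> = 0"
    by (auto simp: zero_set_def)
  have "insert f (vanishing_ideal s X) \<subseteq> vanishing_on_lines s {\<alpha>}"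
    using f \<alpha> by (auto simp: vanishing_ideal_eq_vanishing_on_lines vanishing_on_lines_def
        line_eval_homog[OF f(2)])
  then have "?J \<subseteq> vanishing_on_lines s {\<alpha>}"
    by (rule ideal_gen_least[OF is_ideal_vanishing_on_lines])
  moreover obtain k where "k < s" "\<alpha> k \<noteq> 0"
    using X(2) \<alpha>(1) unfolding proj_point_set_def by blast
  then have "vanishing_on_lines s {\<alpha>} \<subset> vanishing_on s {\<lambda>_. 0}"
    by (rule vanishing_on_lines_psubset_vanishing_at_origin)
  ultimately show "\<exists>P0 P1. is_prime_ideal s P0 \<and> is_prime_ideal s P1 \<and> ?J \<subseteq> P0 \<and> P0 \<subset> P1"
    using is_prime_ideal_vanishing_on_lines[of s \<alpha>] is_prime_ideal_vanishing_at_origin[of s]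
    by blast
next
  fix P0 P1 P2
  assume prime: "is_prime_ideal s P0" "is_prime_ideal s P1" "is_prime_ideal s P2"
    and chain: "ideal_gen s (insert f (vanishing_ideal s X)) \<subseteq> P0" "P0 \<subset> P1" "P1 \<subset> P2"
  have "vanishing_ideal s X \<subseteq> P0"
    using chain(1) ideal_gen_superset by blast
  then obtain \<alpha> where "\<alpha> \<in> X" "vanishing_on_lines s {\<alpha>} \<subseteq> P0"
    using prime_above_vanishing_ideal[OF X(1) prime(1)] by blast
  moreover from X(2) \<open>\<alpha> \<in> X\<close> obtain k where "k < s" "\<alpha> k \<noteq> 0"
    unfolding proj_point_set_def by blast
  ultimately show False
    using no_prime_chain_above_line_ideal[of k s \<alpha> P1 P2] prime chain by blast
qed

section \<open>The degree of \<open>S/(I(X),f)\<close>\<close>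

lemma degree_quot_eq_eventually_hilbert_fun:
  assumes "krull_dim_quot s J = 1" and "\<forall>\<^sub>F d in sequentially. hilbert_fun s J d = n"
  shows "degree_quot s J = n"
proof -
  have "(\<lambda>d. real (hilbert_fun s J d) / real d ^ 0) \<longlonglongrightarrow> real n"
    using assms(2) by (intro tendsto_eventually) (auto elim: eventually_mono)
  then show ?thesis
    using assms(1) by (simp add: degree_quot_def limI)
qed

theorem lemma3p2:
  fixes s :: nat and X :: "(nat \<Rightarrow> 'a::field) set" and f :: "'a mpoly"
  assumes "finite X" and "proj_point_set s X"
    and "f \<in> polyS s" and "f \<noteq> 0" and "homogeneous f"
  shows "real (card (zero_set X f)) =
    (if colon s (vanishing_ideal s X) f \<noteq> vanishing_ideal s X
     then degree_quot s (ideal_gen s (insert f (vanishing_ideal s X)))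
     else 0)"
proof -
  let ?J = "ideal_gen s (insert f (vanishing_ideal s X))"
  from assms(5) obtain df where f: "homog_of_deg df f"
    unfolding homogeneous_def by blast
  show ?thesis
  proof (cases "zero_set X f = {}")
    case True
    then show ?thesis
      using colon_vanishing_ideal_eq[OF assms(3) f] by simp
  next
    case False
    have "\<forall>\<^sub>F d in sequentially. hilbert_fun s ?J d = card (zero_set X f)"
      using hilbert_fun_ideal_gen_insert[OF assms(1-3) f]
      by (intro eventually_sequentiallyI[of "df + card X"])
    then have "degree_quot s ?J = card (zero_set X f)"
      using krull_dim_quot_ideal_gen_insert[OF assms(1-3) f False]
      by (intro degree_quot_eq_eventually_hilbert_fun)
    with False show ?thesis
      using colon_vanishing_ideal_ne_iff[OF assms(1-3) f] by simp
  qed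
qed

end
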